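(* Let $r\ge2$ and $R=\{1,2,r+1,r+2\}$. Then for all $n,k\ge1$, the number $L(n,k)^{-1}_R$ is either $0$ or has sign $(-1)^{n-k}$, i.e. $(-1)^{n-k}L(n,k)^{-1}_R\ge0$. Equivalently, the compositional inverse of $x+x^2+x^{r+1}+x^{r+2}$ has coefficient of $x^n$ of sign $(-1)^{n-1}$ or $0$ for every $n\ge1$.
   Context: For $R\subseteq\mathbb N$, $L(n,k)_R$ is the number of partitions of $[n]$ into $k$ lists (linearly ordered nonempty blocks) each of size in $R$, and $L(n,k)^{-1}_R$ is the $(n,k)$ entry of the inverse of the infinite lower-triangular matrix $[L(n,k)_R]_{n,k\ge1}$ (rows indexed by $n$). *)

theory Defs
  imports Complex_Main
begin

text \<open>Partitions of [n] = {1..n} into k lists (linearly ordered nonempty blocks),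
  each list having length in R.\<close>

definition list_partitions :: "nat \<Rightarrow> nat \<Rightarrow> nat set \<Rightarrow> nat list set set" where
  "list_partitions n k R =
     {P. finite P \<and> card P = k \<and>
         (\<forall>xs\<in>P. xs \<noteq> [] \<and> distinct xs \<and> length xs \<in> R) \<and>
         (\<forall>xs\<in>P. \<forall>ys\<in>P. xs \<noteq> ys \<longrightarrow> set xs \<inter> set ys = {}) \<and>
         (\<Union>xs\<in>P. set xs) = {1..n}}"

definition Lah_R :: "nat set \<Rightarrow> nat \<Rightarrow> nat \<Rightarrow> nat" where
  "Lah_R R n k = card (list_partitions n k R)"

text \<open>Entries of the inverse of an infinite lower-triangular matrix M
  (rows/columns indexed from 1), computed by forward substitution from
  \<open>\<Sum>j=k..n. M n j * X j k = (if n = k then 1 else 0)\<close>.\<close>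

function lt_inv :: "(nat \<Rightarrow> nat \<Rightarrow> real) \<Rightarrow> nat \<Rightarrow> nat \<Rightarrow> real" where
  "lt_inv M n k =
     (if n < k then 0
      else if n = k then 1 / M n n
      else - (\<Sum>j\<in>{k..<n}. M n j * lt_inv M j k) / M n n)"
  by auto
termination
  by (relation "measure (\<lambda>(M, n, k). n)") auto

definition Lah_R_inv :: "nat set \<Rightarrow> nat \<Rightarrow> nat \<Rightarrow> real" where
  "Lah_R_inv R n k = lt_inv (\<lambda>i j. real (Lah_R R i j)) n k"

end

theory Submission
  imports Defs "HOL-Computational_Algebra.Formal_Power_Series"
begin

unbundle fps_syntax

text \<open>Splitting off one list shows \<open>L(n,k)_R = n!/k! [x^n] F^k\<close> for
  \<open>F = \<Sum>_{m\<in>R} x^m\<close>, i.e. the matrix is the Jabotinsky matrix of F; the inverse of the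
  Jabotinsky matrix of F is that of the compositional inverse G of F.
  For \<open>F = x + x^2 + x^(r+1) + x^(r+2)\<close> one has \<open>-F(-x) = x Q(x)\<close> with
  \<open>Q = (1 - x)(1 + (-1)^r x^r)\<close>, so \<open>H(x) = -G(-x)\<close> satisfies \<open>H = x P(H)\<close> with
  \<open>P = 1/Q\<close>. As P has nonnegative coefficients (it is a product of geometric series),
  so does H, and \<open>(-1)^(n-k) [x^n] G^k = [x^n] H^k \<ge> 0\<close>.\<close>

section \<open>Counting list partitions\<close>

definition list_partitions_on :: "'a set \<Rightarrow> nat \<Rightarrow> nat set \<Rightarrow> 'a list set set" where
  "list_partitions_on S k R =
     {P. finite P \<and> card P = k \<and>
         (\<forall>xs\<in>P. xs \<noteq> [] \<and> distinct xs \<and> length xs \<in> R) \<and>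
         (\<forall>xs\<in>P. \<forall>ys\<in>P. xs \<noteq> ys \<longrightarrow> set xs \<inter> set ys = {}) \<and>
         (\<Union>xs\<in>P. set xs) = S}"

definition distinct_lists :: "'a set \<Rightarrow> nat \<Rightarrow> 'a list set" where
  "distinct_lists S m = {xs. length xs = m \<and> distinct xs \<and> set xs \<subseteq> S}"

lemma list_partitions_eq: "list_partitions n k R = list_partitions_on {1..n} k R"
  unfolding list_partitions_def list_partitions_on_def ..

lemma finite_list_partitions_on:
  assumes "finite S"
  shows "finite (list_partitions_on S k R)"
proof (rule finite_subset)
  show "list_partitions_on S k R \<subseteq> Pow {xs. set xs \<subseteq> S \<and> distinct xs}"
    unfolding list_partitions_on_def by auto
  show "finite (Pow {xs. set xs \<subseteq> S \<and> distinct xs})"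
    using finite_subset_distinct[OF assms] by simp
qed

lemma finite_distinct_lists: "finite S \<Longrightarrow> finite (distinct_lists S m)"
  unfolding distinct_lists_def
  by (rule finite_subset[OF _ finite_subset_distinct]) auto

lemma list_partitions_on_0: "list_partitions_on S 0 R = (if S = {} then {{}} else {})"
  unfolding list_partitions_on_def by (auto simp: card_eq_0_iff)

lemma insert_in_list_partitions_on:
  assumes Q: "Q \<in> list_partitions_on (S - set xs) k R"
    and xs: "xs \<noteq> []" "distinct xs" "length xs \<in> R" "set xs \<subseteq> S"
  shows "xs \<notin> Q" "insert xs Q \<in> list_partitions_on S (Suc k) R"
proof -
  have un: "(\<Union>ys\<in>Q. set ys) = S - set xs"
    using Q unfolding list_partitions_on_def by blast
  show nQ: "xs \<notin> Q"
  proof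
    assume "xs \<in> Q"
    then have "set xs \<subseteq> S - set xs" using un by blast
    with xs(1) show False by (cases xs) auto
  qed
  then show "insert xs Q \<in> list_partitions_on S (Suc k) R"
    using Q xs un unfolding list_partitions_on_def by auto
qed

lemma remove_in_list_partitions_on:
  assumes P: "P \<in> list_partitions_on S (Suc k) R" and xs: "xs \<in> P"
  shows "P - {xs} \<in> list_partitions_on (S - set xs) k R"
proof -
  have dj: "\<forall>ys\<in>P. \<forall>zs\<in>P. ys \<noteq> zs \<longrightarrow> set ys \<inter> set zs = {}"
    and un: "(\<Union>ys\<in>P. set ys) = S" using P unfolding list_partitions_on_def by auto
  have "(\<Union>ys\<in>P - {xs}. set ys) = S - set xs"
    using dj un xs by blast
  then show ?thesis using P xs unfolding list_partitions_on_def by auto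
qed

lemma card_marked_list_partitions:
  assumes "0 \<notin> R"
  shows "card (SIGMA P:list_partitions_on S (Suc k) R. P) =
         card (SIGMA xs:(\<Union>m\<in>R. distinct_lists S m). list_partitions_on (S - set xs) k R)"
    (is "card ?B = card ?A")
proof -
  let ?g = "\<lambda>(xs, Q). (insert xs Q, xs)"
  have block: "xs \<noteq> [] \<and> distinct xs \<and> length xs \<in> R \<and> set xs \<subseteq> S"
    if "xs \<in> (\<Union>m\<in>R. distinct_lists S m)" for xs
    using that assms unfolding distinct_lists_def by auto
  have inj: "inj_on ?g ?A"
  proof (rule inj_onI)
    fix p q assume p: "p \<in> ?A" and q: "q \<in> ?A" and eq: "?g p = ?g q"
    obtain xs Q where p_eq: "p = (xs, Q)" by (cases p)
    obtain xs' Q' where q_eq: "q = (xs', Q')" by (cases q)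
    have xs': "xs' = xs" and ins: "insert xs Q = insert xs Q'" using eq p_eq q_eq by auto
    have "xs \<notin> Q" "xs \<notin> Q'"
      using p q insert_in_list_partitions_on(1) block unfolding p_eq q_eq xs' by blast+
    with ins have "Q = Q'" by (metis insert_ident)
    then show "p = q" using p_eq q_eq xs' by simp
  qed
  have img: "?g ` ?A = ?B"
  proof (rule set_eqI, rule iffI)
    fix z assume "z \<in> ?g ` ?A"
    then obtain xs Q where "z = (insert xs Q, xs)" "xs \<in> (\<Union>m\<in>R. distinct_lists S m)"
      "Q \<in> list_partitions_on (S - set xs) k R" by auto
    then show "z \<in> ?B" using insert_in_list_partitions_on(2) block by blast
  next
    fix z assume "z \<in> ?B"
    then obtain P xs where z: "z = (P, xs)" and P: "P \<in> list_partitions_on S (Suc k) R"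
      and xs: "xs \<in> P" by auto
    have "xs \<in> (\<Union>m\<in>R. distinct_lists S m)"
      using P xs unfolding list_partitions_on_def distinct_lists_def by auto
    moreover have "z = ?g (xs, P - {xs})" using z xs by (simp add: insert_absorb)
    ultimately show "z \<in> ?g ` ?A" using remove_in_list_partitions_on[OF P xs] by blast
  qed
  show ?thesis using card_image[OF inj] img by simp
qed

lemma card_list_partitions_on_Suc:
  assumes R: "finite R" "0 \<notin> R" and S: "finite S"
  shows "real (Suc k) * real (card (list_partitions_on S (Suc k) R)) =
         (\<Sum>xs\<in>(\<Union>m\<in>R. distinct_lists S m). real (card (list_partitions_on (S - set xs) k R)))"
proof -
  have "card (SIGMA P:list_partitions_on S (Suc k) R. P) =
        (\<Sum>P\<in>list_partitions_on S (Suc k) R. card P)"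
    using finite_list_partitions_on[OF S]
    by (intro card_SigmaI) (auto simp: list_partitions_on_def)
  also have "\<dots> = Suc k * card (list_partitions_on S (Suc k) R)"
    by (simp add: list_partitions_on_def)
  finally have "real (Suc k) * real (card (list_partitions_on S (Suc k) R)) =
        real (card (SIGMA P:list_partitions_on S (Suc k) R. P))"
    by (simp add: algebra_simps)
  also have "\<dots> = card (SIGMA xs:(\<Union>m\<in>R. distinct_lists S m). list_partitions_on (S - set xs) k R)"
    using card_marked_list_partitions[OF R(2)] by simp
  also have "\<dots> = (\<Sum>xs\<in>(\<Union>m\<in>R. distinct_lists S m). real (card (list_partitions_on (S - set xs) k R)))"
    using finite_distinct_lists[OF S] R(1) S
    by (subst card_SigmaI) (auto intro: finite_list_partitions_on)
  finally show ?thesis .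
qed

lemma card_distinct_lists:
  assumes "finite S"
  shows "real (card (distinct_lists S m)) =
         (if m \<le> card S then fact (card S) / fact (card S - m) else 0)"
proof (cases "m \<le> card S")
  case True
  have "card (distinct_lists S m) = \<Prod>{card S - m + 1 .. card S}"
    unfolding distinct_lists_def by (rule card_lists_distinct_length_eq[OF assms True])
  also have "\<dots> = fact (card S) div fact (card S - m)"
    using True by (simp add: fact_div_fact)
  also have "real \<dots> = fact (card S) / fact (card S - m)"
    by (simp add: real_of_nat_div fact_dvd)
  finally show ?thesis using True by simp
next
  case False
  have "length xs \<le> card S" if "distinct xs" "set xs \<subseteq> S" for xs :: "'a list"
    using that card_mono[OF assms] distinct_card by metis
  with False have "distinct_lists S m = {}"
    unfolding distinct_lists_def by auto
  then show ?thesis using False by simp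
qed

section \<open>Jabotinsky matrices\<close>

definition fps_of_set :: "nat set \<Rightarrow> real fps" where
  "fps_of_set R = Abs_fps (\<lambda>n. if n \<in> R then 1 else 0)"

definition jabotinsky :: "real fps \<Rightarrow> nat \<Rightarrow> nat \<Rightarrow> real" where
  "jabotinsky F n k = fact n / fact k * (F ^ k $ n)"

lemma jabotinsky_0: "jabotinsky F n 0 = (if n = 0 then 1 else 0)"
  by (simp add: jabotinsky_def)

lemma jabotinsky_diag: "F $ 0 = 0 \<Longrightarrow> jabotinsky F n n = (F $ 1) ^ n"
  by (simp add: jabotinsky_def startsby_zero_power_nth_same)

lemma jabotinsky_Suc:
  "real (Suc k) * jabotinsky F n (Suc k) =
     (\<Sum>m\<le>n. F $ m * (fact n / fact (n - m)) * jabotinsky F (n - m) k)"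
proof -
  have "real (Suc k) * jabotinsky F n (Suc k) =
        real (Suc k) * (fact n / (real (Suc k) * fact k)) * ((F * F ^ k) $ n)"
    by (simp add: jabotinsky_def fact_Suc)
  also have "\<dots> = fact n / fact k * ((F * F ^ k) $ n)"
    by (simp del: of_nat_Suc)
  also have "\<dots> = (\<Sum>m\<le>n. F $ m * (fact n / fact k * F ^ k $ (n - m)))"
    by (simp add: fps_mult_nth atLeast0AtMost sum_distrib_left mult_ac)
  also have "\<dots> = (\<Sum>m\<le>n. F $ m * (fact n / fact (n - m)) * jabotinsky F (n - m) k)"
    by (rule sum.cong) (auto simp: jabotinsky_def)
  finally show ?thesis .
qed

lemma card_list_partitions_on:
  assumes R: "finite R" "0 \<notin> R" and S: "finite S"
  shows "real (card (list_partitions_on S k R)) = jabotinsky (fps_of_set R) (card S) k"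
  using S
proof (induction k arbitrary: S)
  case 0
  then show ?case by (simp add: list_partitions_on_0 jabotinsky_0)
next
  case (Suc k)
  let ?n = "card S" and ?D = "distinct_lists S"
  have "real (Suc k) * real (card (list_partitions_on S (Suc k) R)) =
        (\<Sum>xs\<in>(\<Union>m\<in>R. ?D m). real (card (list_partitions_on (S - set xs) k R)))"
    by (rule card_list_partitions_on_Suc[OF R Suc.prems])
  also have "\<dots> = (\<Sum>m\<in>R. \<Sum>xs\<in>?D m. jabotinsky (fps_of_set R) (?n - length xs) k)"
  proof (subst sum.UNION_disjoint[OF R(1)])
    show "\<forall>m\<in>R. finite (?D m)" using finite_distinct_lists[OF Suc.prems] by blast
    show "\<forall>m\<in>R. \<forall>m'\<in>R. m \<noteq> m' \<longrightarrow> ?D m \<inter> ?D m' = {}" by (auto simp: distinct_lists_def)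
    have "card (S - set xs) = ?n - length xs" if "xs \<in> ?D m" for xs m
      using that Suc.prems by (simp add: distinct_lists_def card_Diff_subset distinct_card)
    then show "(\<Sum>m\<in>R. \<Sum>xs\<in>?D m. real (card (list_partitions_on (S - set xs) k R))) =
               (\<Sum>m\<in>R. \<Sum>xs\<in>?D m. jabotinsky (fps_of_set R) (?n - length xs) k)"
      using Suc.IH Suc.prems by (intro sum.cong) auto
  qed
  also have "\<dots> = (\<Sum>m\<in>R. real (card (?D m)) * jabotinsky (fps_of_set R) (?n - m) k)"
    by (simp add: distinct_lists_def)
  also have "\<dots> = (\<Sum>m\<le>?n. fps_of_set R $ m * (fact ?n / fact (?n - m))
                            * jabotinsky (fps_of_set R) (?n - m) k)"
    by (rule sum.mono_neutral_cong) (use R(1) card_distinct_lists[OF Suc.prems] in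
        \<open>auto simp: fps_of_set_def\<close>)
  also have "\<dots> = real (Suc k) * jabotinsky (fps_of_set R) ?n (Suc k)"
    by (rule jabotinsky_Suc[symmetric])
  finally show ?case by simp
qed

lemma Lah_R_eq_jabotinsky:
  assumes "finite R" "0 \<notin> R"
  shows "real (Lah_R R n k) = jabotinsky (fps_of_set R) n k"
  using card_list_partitions_on[OF assms, of "{1..n}"]
  by (simp add: Lah_R_def list_partitions_eq)

lemma jabotinsky_fps_inv:
  assumes F0: "F $ 0 = 0" and F1: "F $ 1 \<noteq> 0" and "k \<le> n"
  shows "(\<Sum>j=k..n. jabotinsky F n j * jabotinsky (fps_inv F) j k) = (if n = k then 1 else 0)"
proof -
  let ?G = "fps_inv F"
  have "(\<Sum>j=k..n. jabotinsky F n j * jabotinsky ?G j k) =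
        fact n / fact k * (\<Sum>j=k..n. ?G ^ k $ j * F ^ j $ n)"
    by (simp add: jabotinsky_def sum_distrib_left mult_ac)
  also have "(\<Sum>j=k..n. ?G ^ k $ j * F ^ j $ n) = (\<Sum>j=0..n. ?G ^ k $ j * F ^ j $ n)"
    using startsby_zero_power_prefix[of ?G k] by (intro sum.mono_neutral_left) (auto simp: fps_inv_def)
  also have "\<dots> = (?G oo F) ^ k $ n"
    by (simp add: fps_compose_nth fps_compose_power[OF F0])
  also have "?G oo F = fps_X" by (rule fps_inv[OF F0 F1])
  finally show ?thesis by simp
qed

lemma lt_inv_eqI:
  assumes diag: "\<And>n. M n n \<noteq> 0"
    and inv: "\<And>n k. k \<le> n \<Longrightarrow> (\<Sum>j=k..n. M n j * X j k) = (if n = k then 1 else 0)"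
  shows "k \<le> n \<Longrightarrow> lt_inv M n k = X n k"
proof (induction n rule: less_induct)
  case (less n)
  have row: "(\<Sum>j=k..<n. M n j * X j k) + M n n * X n k = (if n = k then 1 else 0)"
    using inv[OF less.prems] less.prems by (simp add: sum.last_plus)
  show ?case
  proof (cases "n = k")
    case True
    then show ?thesis using row diag[of n] by (subst lt_inv.simps) (simp add: field_simps)
  next
    case False
    have "(\<Sum>j=k..<n. M n j * lt_inv M j k) = (\<Sum>j=k..<n. M n j * X j k)"
      using less.IH by (intro sum.cong) auto
    then have "lt_inv M n k = - (\<Sum>j=k..<n. M n j * X j k) / M n n"
      using False less.prems by (subst lt_inv.simps) simp
    then have "M n n * lt_inv M n k = - (\<Sum>j=k..<n. M n j * X j k)"
      using diag[of n] by (simp del: lt_inv.simps)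
    also have "\<dots> = M n n * X n k"
      using row False by (simp add: eq_neg_iff_add_eq_0 add.commute)
    finally show ?thesis using diag[of n] by (simp del: lt_inv.simps)
  qed
qed

lemma Lah_R_inv_eq_jabotinsky:
  assumes R: "finite R" "0 \<notin> R" "1 \<in> R" and "k \<le> n"
  shows "Lah_R_inv R n k = jabotinsky (fps_inv (fps_of_set R)) n k"
  unfolding Lah_R_inv_def
proof (rule lt_inv_eqI[OF _ _ \<open>k \<le> n\<close>])
  have F0: "fps_of_set R $ 0 = 0" and F1: "fps_of_set R $ 1 = 1"
    using R by (simp_all add: fps_of_set_def)
  show "real (Lah_R R m m) \<noteq> 0" for m
    using Lah_R_eq_jabotinsky[OF R(1,2)] jabotinsky_diag[OF F0] F1 by simp
  show "(\<Sum>j=i..m. real (Lah_R R m j) * jabotinsky (fps_inv (fps_of_set R)) j i) =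
        (if m = i then 1 else 0)" if "i \<le> m" for i m
    using jabotinsky_fps_inv[OF F0 _ that] Lah_R_eq_jabotinsky[OF R(1,2)] F1 by simp
qed

lemma jabotinsky_reflect:
  assumes "k \<le> n"
  shows "jabotinsky (- (G oo - fps_X)) n k = (-1) ^ (n - k) * jabotinsky G n k"
proof -
  have "(- (G oo - fps_X)) ^ k $ n = (-1) ^ k * ((G oo - fps_X) ^ k $ n)"
    by (cases "even k") (simp_all add: power_minus_odd)
  also have "(G oo - fps_X) ^ k = G ^ k oo - fps_X"
    by (rule fps_compose_power) simp
  also have "(G ^ k oo - fps_X) $ n = (-1) ^ n * (G ^ k $ n)"
    by (simp add: fps_compose_uminus')
  also have "(-1) ^ k * ((-1) ^ n * (G ^ k $ n)) = (-1) ^ (n - k + 2 * k) * (G ^ k $ n)"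
    using assms by (simp add: power_add)
  also have "\<dots> = (-1) ^ (n - k) * (G ^ k $ n)"
    by (simp add: power_add power_mult)
  finally show ?thesis by (simp add: jabotinsky_def)
qed

section \<open>Series with nonnegative coefficients\<close>

lemma fps_mult_nth_nonneg:
  fixes A B :: "'a::linordered_semiring_strict fps"
  assumes "\<And>i. 0 \<le> A $ i" "\<And>i. 0 \<le> B $ i"
  shows "0 \<le> (A * B) $ n"
  using assms by (simp add: fps_mult_nth sum_nonneg)

lemma fps_power_nth_nonneg:
  fixes A :: "'a::linordered_semiring_1_strict fps"
  assumes "\<And>i. 0 \<le> A $ i"
  shows "0 \<le> (A ^ k) $ n"
proof (induction k arbitrary: n)
  case (Suc k)
  then show ?case using fps_mult_nth_nonneg[OF assms, of "A ^ k"] by simp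
qed simp

lemma jabotinsky_nonneg: "(\<And>i. 0 \<le> F $ i) \<Longrightarrow> 0 \<le> jabotinsky F n k"
  unfolding jabotinsky_def by (simp add: fps_power_nth_nonneg)

definition fps_multiples :: "nat \<Rightarrow> 'a::comm_ring_1 fps" where
  "fps_multiples d = Abs_fps (\<lambda>n. if d dvd n then 1 else 0)"

lemma fps_multiples_mult:
  assumes "d > 0"
  shows "fps_multiples d * (1 - fps_X ^ d) = (1 :: 'a::comm_ring_1 fps)"
proof (rule fps_ext)
  fix n
  have "(fps_multiples d * (1 - fps_X ^ d)) $ n = fps_multiples d $ n - (fps_X ^ d * fps_multiples d) $ n"
    by (simp add: algebra_simps)
  also have "\<dots> = (1 :: 'a fps) $ n"
    using assms by (auto simp: fps_X_power_mult_nth fps_multiples_def dvd_minus_self dest: dvd_imp_le)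
  finally show "(fps_multiples d * (1 - fps_X ^ d)) $ n = (1 :: 'a fps) $ n" .
qed

lemma inverse_one_minus_X_power:
  "d > 0 \<Longrightarrow> inverse (1 - fps_X ^ d) = (fps_multiples d :: 'a::field fps)"
  by (rule fps_inverse_unique) (simp add: fps_multiples_mult mult.commute)

lemma fps_inverse_alternating_nth_nonneg:
  assumes "r > 0"
  shows "0 \<le> inverse ((1 - fps_X) * (1 + (-1) ^ r * fps_X ^ r) :: 'a::linordered_field fps) $ n"
proof (cases "even r")
  case True
  \<comment> \<open>\<open>1/((1 - x)(1 + x^r)) = (1 + x + \<dots> + x^(r-1)) / (1 - x^(2r))\<close>\<close>
  define S :: "'a fps" where "S = (\<Sum>i<r. fps_X ^ i)"
  define M :: "'a fps" where "M = fps_multiples (2 * r)"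
  have "(1 - fps_X) * (1 + (-1) ^ r * fps_X ^ r) * (S * M) = ((1 - fps_X) * S) * (1 + fps_X ^ r) * M"
    using True by (simp add: mult_ac)
  also have "(1 - fps_X) * S = 1 - fps_X ^ r"
    by (simp add: S_def one_diff_power_eq)
  also have "(1 - fps_X ^ r) * (1 + fps_X ^ r) * M = (1 - fps_X ^ r * fps_X ^ r) * M"
    by (simp add: algebra_simps)
  also have "\<dots> = 1"
    by (simp add: M_def mult.commute assms fps_multiples_mult flip: power_add mult_2)
  finally have "inverse ((1 - fps_X) * (1 + (-1) ^ r * fps_X ^ r) :: 'a fps) = S * M"
    by (rule fps_inverse_unique)
  then show ?thesis
    by (simp only:) (intro fps_mult_nth_nonneg; simp add: S_def M_def fps_sum_nth fps_multiples_def sum_nonneg)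
next
  case False
  then have "inverse ((1 - fps_X) * (1 + (-1) ^ r * fps_X ^ r) :: 'a fps) =
             inverse (1 - fps_X ^ 1) * inverse (1 - fps_X ^ r)"
    by (simp add: fps_inverse_mult)
  also have "\<dots> = fps_multiples 1 * fps_multiples r"
    using assms by (simp only: inverse_one_minus_X_power zero_less_one)
  finally show ?thesis
    by (simp only:) (intro fps_mult_nth_nonneg; simp add: fps_multiples_def)
qed

text \<open>Strong induction on n works because \<open>[x^(m+1)] H = [x^m] P(H)\<close> only involves the
  coefficients of H up to degree m.\<close>

lemma fps_fixpoint_nth_nonneg:
  fixes H P :: "'a::linordered_idom fps"
  assumes H0: "H $ 0 = 0" and H_eq: "H = fps_X * (P oo H)" and P: "\<And>i. 0 \<le> P $ i"
  shows "0 \<le> H $ n"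
proof (induction n rule: less_induct)
  case (less n)
  show ?case
  proof (cases n)
    case 0
    with H0 show ?thesis by simp
  next
    case (Suc m)
    have powers: "0 \<le> H ^ i $ j" if "j \<le> m" for i j
      using that
    proof (induction i arbitrary: j)
      case (Suc i)
      have "0 \<le> (\<Sum>l=0..j. H $ l * H ^ i $ (j - l))"
        using Suc less.IH \<open>n = Suc m\<close> by (intro sum_nonneg) simp
      then show ?case by (simp add: fps_mult_nth)
    qed simp
    have "H $ n = (P oo H) $ m"
      using Suc by (subst H_eq) simp
    also have "\<dots> = (\<Sum>i=0..m. P $ i * H ^ i $ m)"
      by (simp add: fps_compose_nth)
    also have "\<dots> \<ge> 0"
      using powers P by (intro sum_nonneg) simp
    finally show ?thesis .
  qed
qed

lemma fps_nth_nonneg_if_mult_compose_eq_X: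
  fixes H Q :: "'a::linordered_field fps"
  assumes H0: "H $ 0 = 0" and Q0: "Q $ 0 \<noteq> 0" and HQ: "H * (Q oo H) = fps_X"
    and Q_inv: "\<And>i. 0 \<le> inverse Q $ i"
  shows "0 \<le> H $ n"
proof (rule fps_fixpoint_nth_nonneg[OF H0 _ Q_inv])
  have "(inverse Q oo H) * (Q oo H) = (inverse Q * Q) oo H"
    by (rule fps_compose_mult_distrib[OF H0, symmetric])
  also have "inverse Q * Q = 1"
    by (rule inverse_mult_eq_1[OF Q0])
  finally have "(inverse Q oo H) * (Q oo H) = 1"
    by simp
  then have "H = H * (Q oo H) * (inverse Q oo H)"
    by (simp add: mult.assoc mult.commute[of "Q oo H"])
  then show "H = fps_X * (inverse Q oo H)"
    by (simp add: HQ)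
qed

lemma fps_inv_reflect_mult_compose:
  fixes F Q :: "'a::field fps"
  assumes F0: "F $ 0 = 0" and F1: "F $ 1 \<noteq> 0" and FQ: "- (F oo - fps_X) = fps_X * Q"
  defines "H \<equiv> - (fps_inv F oo - fps_X)"
  shows "H * (Q oo H) = fps_X"
proof -
  let ?G = "fps_inv F"
  have G0: "?G $ 0 = 0" by (simp add: fps_inv_def)
  have H0: "H $ 0 = 0" using G0 by (simp add: H_def fps_compose_nth)
  have "H * (Q oo H) = (fps_X * Q) oo H"
    using H0 by (simp add: fps_compose_mult_distrib)
  also have "\<dots> = - ((F oo - fps_X) oo H)"
    by (simp add: FQ[symmetric] fps_compose_uminus)
  also have "(F oo - fps_X) oo H = F oo (- fps_X oo H)"
    by (rule fps_compose_assoc[symmetric]) (simp_all add: H0)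
  also have "- fps_X oo H = ?G oo - fps_X"
    using H0 by (simp add: H_def fps_compose_uminus)
  also have "F oo (?G oo - fps_X) = (F oo ?G) oo - fps_X"
    using G0 by (simp add: fps_compose_assoc)
  also have "F oo ?G = fps_X"
    by (rule fps_inv_right[OF F0 F1])
  finally show ?thesis by simp
qed

section \<open>The set \<open>R = {1, 2, r + 1, r + 2}\<close>\<close>

lemma fps_of_set_four:
  assumes "r \<ge> 2"
  shows "fps_of_set {1, 2, r + 1, r + 2} = fps_X + fps_X ^ 2 + fps_X ^ (r + 1) + fps_X ^ (r + 2)"
  using assms by (auto simp: fps_eq_iff fps_of_set_def)

lemma reflect_four_terms:
  "- ((fps_X + fps_X ^ 2 + fps_X ^ (r + 1) + fps_X ^ (r + 2)) oo - fps_X) =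
   fps_X * ((1 - fps_X) * (1 + (-1) ^ r * fps_X ^ r) :: 'a::idom fps)"
proof -
  have "fps_X ^ m oo - fps_X = ((fps_X :: 'a fps) oo - fps_X) ^ m" for m
    by (rule fps_compose_power[symmetric]) simp
  then have "fps_X ^ m oo - fps_X = (- fps_X :: 'a fps) ^ m" for m
    by simp
  moreover have "fps_X oo - fps_X = (- fps_X :: 'a fps)"
    by simp
  ultimately show ?thesis
    by (simp only: fps_compose_add_distrib)
      (simp add: power_minus[of "fps_X :: 'a fps"] power2_eq_square algebra_simps)
qed

lemma reflect_fps_inv_four_terms_nth_nonneg:
  assumes "r \<ge> 2"
  shows "0 \<le> (- (fps_inv (fps_of_set {1, 2, r + 1, r + 2}) oo - fps_X)) $ i"
proof -
  define F where "F = fps_of_set {1, 2, r + 1, r + 2}"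
  define Q :: "real fps" where "Q = (1 - fps_X) * (1 + (-1) ^ r * fps_X ^ r)"
  define H where "H = - (fps_inv F oo - fps_X)"
  have F0: "F $ 0 = 0" and F1: "F $ 1 = 1" by (auto simp: F_def fps_of_set_def)
  have "- (F oo - fps_X) = fps_X * Q"
    unfolding F_def Q_def fps_of_set_four[OF assms] by (rule reflect_four_terms)
  then have HQ: "H * (Q oo H) = fps_X"
    unfolding H_def using F0 F1 by (intro fps_inv_reflect_mult_compose) simp_all
  have H0: "H $ 0 = 0"
    by (simp add: H_def fps_inv_def fps_compose_nth)
  have Q0: "Q $ 0 \<noteq> 0"
    using assms by (simp add: Q_def)
  have "0 \<le> inverse Q $ j" for j
    unfolding Q_def using assms by (intro fps_inverse_alternating_nth_nonneg) simp
  then show ?thesis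
    unfolding H_def[symmetric] F_def[symmetric]
    by (rule fps_nth_nonneg_if_mult_compose_eq_X[OF H0 Q0 HQ])
qed

theorem mainTheorem9:
  fixes r n k :: nat
  assumes "r \<ge> 2" and "n \<ge> 1" and "k \<ge> 1"
  shows "(-1) ^ (n - k) * Lah_R_inv {1, 2, r + 1, r + 2} n k \<ge> 0"
proof (cases "k \<le> n")
  case True
  let ?R = "{1, 2, r + 1, r + 2}"
  let ?H = "- (fps_inv (fps_of_set ?R) oo - fps_X)"
  have "(-1) ^ (n - k) * Lah_R_inv ?R n k = jabotinsky ?H n k"
    using Lah_R_inv_eq_jabotinsky[of ?R, OF _ _ _ True] jabotinsky_reflect[OF True] by simp
  also have "\<dots> \<ge> 0"
    using reflect_fps_inv_four_terms_nth_nonneg[OF assms(1)] by (rule jabotinsky_nonneg)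
  finally show ?thesis .
next
  case False
  then show ?thesis
    by (simp add: Lah_R_inv_def)
qed

end
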